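(* Fix a constant $p>0$. Let $q(n,\ell)$ be any function with $q(n,\ell)/(\ell n)\to 0$ as $n,\ell\to\infty$ (i.e., for every $\varepsilon>0$ there is $N$ such that $q(n,\ell)\le \varepsilon \ell n$ whenever $n,\ell\ge N$). Then there is no randomized algorithm that, for every tournament $T$ on $n$ vertices whose champions lose $\ell$ matches, performs at most $q(n,\ell)$ arc lookups and outputs a champion of $T$ with probability at least $p$.
   Context: A tournament $T=(V,E)$ is an oriented complete graph: for every pair of distinct vertices $u,v$ exactly one of $(u,v)$, $(v,u)$ is in $E$; $(u,v)\in E$ means "$u$ beats $v$". An arc lookup is a query that, given distinct $u,v$, reveals the orientation of the arc between them. A champion (Copeland winner) is a vertex of maximum out-degree, i.e., one losing the fewest matches; $\ell$ denotes the number of matches it loses. A randomized algorithm may use internal random coins; the probability is over these coins, and the success guarantee must hold for every input tournament. *)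

theory Defs
  imports "HOL-Probability.Probability_Mass_Function"
begin

text \<open>Tournaments on the vertex set {0..<n}: T u v means u beats v.
  The relation is empty outside {0..<n}, irreflexive, and for distinct
  vertices exactly one orientation holds.\<close>
definition tournament :: "nat \<Rightarrow> (nat \<Rightarrow> nat \<Rightarrow> bool) \<Rightarrow> bool" where
  "tournament n T \<longleftrightarrow>
     (\<forall>u v. T u v \<longrightarrow> u < n \<and> v < n) \<and>
     (\<forall>u. \<not> T u u) \<and>
     (\<forall>u<n. \<forall>v<n. u \<noteq> v \<longrightarrow> (T u v \<longleftrightarrow> \<not> T v u))"

definition outdeg :: "nat \<Rightarrow> (nat \<Rightarrow> nat \<Rightarrow> bool) \<Rightarrow> nat \<Rightarrow> nat" where
  "outdeg n T v = card {u. u < n \<and> T v u}"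

definition champion :: "nat \<Rightarrow> (nat \<Rightarrow> nat \<Rightarrow> bool) \<Rightarrow> nat \<Rightarrow> bool" where
  "champion n T v \<longleftrightarrow> v < n \<and> (\<forall>u<n. outdeg n T u \<le> outdeg n T v)"

definition champ_losses :: "nat \<Rightarrow> (nat \<Rightarrow> nat \<Rightarrow> bool) \<Rightarrow> nat" where
  "champ_losses n T = n - 1 - Max {outdeg n T v | v. v < n}"

text \<open>Deterministic adaptive arc-lookup algorithms = decision trees.
  Query u v l r: look up the arc between u and v; continue with l if u beats v,
  with r otherwise. Leaf w: output w.\<close>
datatype dtree = Leaf nat | Query nat nat dtree dtree

fun run :: "(nat \<Rightarrow> nat \<Rightarrow> bool) \<Rightarrow> dtree \<Rightarrow> nat" where
  "run T (Leaf w) = w"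
| "run T (Query u v l r) = (if T u v then run T l else run T r)"

fun lookups :: "(nat \<Rightarrow> nat \<Rightarrow> bool) \<Rightarrow> dtree \<Rightarrow> nat" where
  "lookups T (Leaf w) = 0"
| "lookups T (Query u v l r) = Suc (if T u v then lookups T l else lookups T r)"

text \<open>A randomized algorithm for n-vertex tournaments is a probability
  distribution over decision trees (its internal coins choose the tree).\<close>

end

theory Submission
  imports Defs
begin

text \<open>Reversing one arc b \<rightarrow> a of the circulant tournament on n = 2m + 1 vertices,
  in which every vertex beats the next m, makes a the unique champion, losing m - 1 matches.
  A decision tree making fewer than k lookups follows the same path as on the circulant
  tournament unless it queries the reversed pair, so it names the champion for at most
  2k + n of the nm reversals. Averaging over all reversals, success probability p on each
  of them forces p n m \<le> 2k + n, i.e. k is of order \<ell> n rather than o(\<ell> n).\<close>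

fun queries_within :: "(nat \<Rightarrow> nat \<Rightarrow> bool) \<Rightarrow> nat \<Rightarrow> dtree \<Rightarrow> (nat \<times> nat) set" where
  "queries_within T 0 t = {}"
| "queries_within T (Suc k) (Leaf w) = {}"
| "queries_within T (Suc k) (Query u v l r) =
     insert (u, v) (queries_within T k (if T u v then l else r))"

lemma finite_queries_within: "finite (queries_within T k t)"
  by (induction T k t rule: queries_within.induct) auto

lemma card_queries_within_le: "card (queries_within T k t) \<le> k"
proof (induction T k t rule: queries_within.induct)
  case (3 T k u v l r)
  then show ?case
    using finite_queries_within by (simp add: card_insert_if le_SucI)
qed auto

lemma agree_on_queries_within:
  assumes "\<forall>(u, v) \<in> queries_within T k t. T' u v = T u v"
  shows "min k (lookups T' t) = min k (lookups T t)"
    and "lookups T t < k \<Longrightarrow> run T' t = run T t"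
  using assms
  by (induction T k t rule: queries_within.induct) (auto split: if_splits)

definition reorient :: "(nat \<Rightarrow> nat \<Rightarrow> bool) \<Rightarrow> nat \<times> nat \<Rightarrow> nat \<Rightarrow> nat \<Rightarrow> bool" where
  "reorient T e u v = (if (u, v) = e then True else if (v, u) = e then False else T u v)"

lemma card_reorient_detected_le:
  assumes E: "E \<subseteq> {..<n} \<times> {..<n}"
    and short: "\<forall>e \<in> E. lookups (reorient T e) t < k"
  shows "card {e \<in> E. run (reorient T e) t = fst e} \<le> 2 * k + n"
proof -
  define S where "S = queries_within T k t"
  have "{e \<in> E. run (reorient T e) t = fst e} \<subseteq> S \<union> prod.swap ` S \<union> {run T t} \<times> {..<n}"
  proof
    fix e
    assume e: "e \<in> {e \<in> E. run (reorient T e) t = fst e}"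
    show "e \<in> S \<union> prod.swap ` S \<union> {run T t} \<times> {..<n}"
    proof (cases "e \<in> S \<union> prod.swap ` S")
      case False
      then have "\<forall>(u, v) \<in> S. reorient T e u v = T u v"
        by (auto simp: reorient_def intro: rev_image_eqI)
      note agree = agree_on_queries_within[OF this[unfolded S_def]]
      have "lookups (reorient T e) t < k"
        using short e by blast
      then have "lookups T t < k"
        using agree(1) by (auto simp: min_def split: if_splits)
      then show ?thesis
        using agree(2) e E by (auto simp: mem_Times_iff)
    qed simp
  qed
  then have "card {e \<in> E. run (reorient T e) t = fst e}
      \<le> card (S \<union> prod.swap ` S \<union> {run T t} \<times> {..<n})"
    by (intro card_mono) (auto simp: S_def finite_queries_within)
  also have "\<dots> \<le> card S + card (prod.swap ` S) + card ({run T t} \<times> {..<n})"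
    by (meson add_le_mono card_Un_le le_trans order_refl)
  also have "\<dots> \<le> 2 * k + n"
    using card_queries_within_le[of T k t] card_image_le[of S prod.swap]
    by (simp add: S_def finite_queries_within card_cartesian_product)
  finally show ?thesis .
qed

lemma sum_prob_le_card_bound:
  fixes M :: "'a pmf"
  assumes "finite I" and "\<forall>x \<in> set_pmf M. card {i \<in> I. x \<in> S i} \<le> B"
  shows "(\<Sum>i\<in>I. measure_pmf.prob M (S i)) \<le> B"
proof -
  have int: "integrable (measure_pmf M) (indicator (S i) :: 'a \<Rightarrow> real)" for i
    by (rule measure_pmf.integrable_const_bound[where B = 1]) auto
  have "(\<Sum>i\<in>I. measure_pmf.prob M (S i))
      = measure_pmf.expectation M (\<lambda>x. \<Sum>i\<in>I. indicator (S i) x :: real)"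
    using int by (simp add: Bochner_Integration.integral_sum)
  also have "\<dots> \<le> B"
  proof (rule measure_pmf.integral_le_const)
    show "integrable (measure_pmf M) (\<lambda>x. \<Sum>i\<in>I. indicator (S i) x :: real)"
      using int by simp
    show "AE x in measure_pmf M. (\<Sum>i\<in>I. indicator (S i) x :: real) \<le> B"
    proof (rule AE_pmfI)
      fix x assume "x \<in> set_pmf M"
      moreover have "(\<Sum>i\<in>I. indicator (S i) x :: real) = card {i \<in> I. x \<in> S i}"
        using assms(1) by (simp add: indicator_def sum.If_cases Int_def conj_commute)
      ultimately show "(\<Sum>i\<in>I. indicator (S i) x :: real) \<le> B"
        using assms(2) by simp
    qed
  qed
  finally show ?thesis .
qed

lemma tournament_arc_lt: "tournament n T \<Longrightarrow> T u v \<Longrightarrow> u < n \<and> v < n"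
  unfolding tournament_def by blast

lemma tournament_irrefl: "tournament n T \<Longrightarrow> \<not> T u u"
  unfolding tournament_def by blast

lemma tournament_antisym:
  "tournament n T \<Longrightarrow> u < n \<Longrightarrow> v < n \<Longrightarrow> u \<noteq> v \<Longrightarrow> T u v \<longleftrightarrow> \<not> T v u"
  unfolding tournament_def by blast

lemma reorient_antisym:
  assumes T: "tournament n T" and "u < n" "v < n" "u \<noteq> v"
  shows "reorient T e u v \<longleftrightarrow> \<not> reorient T e v u"
proof (cases "(u, v) = e \<or> (v, u) = e")
  case True
  then show ?thesis
    using \<open>u \<noteq> v\<close> unfolding reorient_def by auto
next
  case False
  then show ?thesis
    using tournament_antisym[OF assms] unfolding reorient_def by simp
qed

lemma tournament_reorient:
  assumes T: "tournament n T" and ba: "T b a"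
  shows "tournament n (reorient T (a, b))"
proof -
  have ab: "a < n" "b < n" "a \<noteq> b"
    using tournament_arc_lt[OF T ba] tournament_irrefl[OF T] ba by auto
  have "u < n \<and> v < n" if "reorient T (a, b) u v" for u v
    using that ab tournament_arc_lt[OF T] by (auto simp: reorient_def split: if_splits)
  moreover have "\<not> reorient T (a, b) u u" for u
    using ab tournament_irrefl[OF T] by (simp add: reorient_def)
  ultimately show ?thesis
    using reorient_antisym[OF T] unfolding tournament_def by blast
qed

lemma outdeg_reorient:
  assumes T: "tournament n T" and ba: "T b a"
  shows "outdeg n (reorient T (a, b)) u =
    (if u = a then Suc (outdeg n T a) else if u = b then outdeg n T b - 1 else outdeg n T u)"
proof -
  have ab: "a < n" "b < n" "a \<noteq> b"
    using tournament_arc_lt[OF T ba] tournament_irrefl[OF T] ba by auto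
  then have "\<not> T a b"
    using tournament_antisym[OF T] ba by blast
  have fin: "finite {v. v < n \<and> T w v}" for w
    by simp
  consider "u = a" | "u = b" | "u \<noteq> a" "u \<noteq> b"
    by blast
  then show ?thesis
  proof cases
    case 1
    then have "{v. v < n \<and> reorient T (a, b) u v} = insert b {v. v < n \<and> T a v}"
      using ab by (auto simp: reorient_def)
    then show ?thesis
      using 1 \<open>\<not> T a b\<close> fin by (simp add: outdeg_def)
  next
    case 2
    then have "{v. v < n \<and> reorient T (a, b) u v} = {v. v < n \<and> T b v} - {a}"
      using ab by (auto simp: reorient_def)
    then show ?thesis
      using 2 ab ba fin by (simp add: outdeg_def)
  next
    case 3
    then have "{v. v < n \<and> reorient T (a, b) u v} = {v. v < n \<and> T u v}"
      by (auto simp: reorient_def)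
    then show ?thesis
      using 3 by (simp add: outdeg_def)
  qed
qed

lemma outdeg_reorient_regular:
  assumes T: "tournament n T" and reg: "\<forall>u<n. outdeg n T u = d" and ba: "T b a"
    and "u < n"
  shows "outdeg n (reorient T (a, b)) u = (if u = a then Suc d else if u = b then d - 1 else d)"
proof -
  have "a < n" "b < n"
    using tournament_arc_lt[OF T ba] by auto
  then show ?thesis
    using outdeg_reorient[OF T ba, of u] reg \<open>u < n\<close> by auto
qed

lemma champion_reorient_regular:
  assumes T: "tournament n T" and reg: "\<forall>u<n. outdeg n T u = d" and ba: "T b a"
  shows "champion n (reorient T (a, b)) v \<longleftrightarrow> v = a"
proof
  have "a < n"
    using tournament_arc_lt[OF T ba] by simp
  note out = outdeg_reorient_regular[OF T reg ba]
  show "v = a" if "champion n (reorient T (a, b)) v"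
  proof -
    have "v < n" "Suc d \<le> outdeg n (reorient T (a, b)) v"
      using that out[OF \<open>a < n\<close>] \<open>a < n\<close> unfolding champion_def by auto
    then show "v = a"
      using out[of v] by (auto split: if_splits)
  qed
  show "champion n (reorient T (a, b)) v" if "v = a"
    using that out \<open>a < n\<close> unfolding champion_def by auto
qed

lemma champ_losses_reorient_regular:
  assumes T: "tournament n T" and reg: "\<forall>u<n. outdeg n T u = d" and ba: "T b a"
  shows "champ_losses n (reorient T (a, b)) = n - 2 - d"
proof -
  have "a < n"
    using tournament_arc_lt[OF T ba] by simp
  note out = outdeg_reorient_regular[OF T reg ba]
  have "Max {outdeg n (reorient T (a, b)) v | v. v < n} = Suc d"
  proof (rule Max_eqI)
    show "finite {outdeg n (reorient T (a, b)) v | v. v < n}"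
      by simp
    show "y \<le> Suc d" if "y \<in> {outdeg n (reorient T (a, b)) v | v. v < n}" for y
      using that out by auto
    show "Suc d \<in> {outdeg n (reorient T (a, b)) v | v. v < n}"
      using out[OF \<open>a < n\<close>] \<open>a < n\<close> by force
  qed
  then show ?thesis
    unfolding champ_losses_def by simp
qed

lemma card_arcs_regular:
  assumes T: "tournament n T" and reg: "\<forall>u<n. outdeg n T u = d"
  shows "card {(a, b). T b a} = n * d"
proof -
  have arcs: "{(a, b). T b a} = prod.swap ` (SIGMA b:{..<n}. {a. a < n \<and> T b a})"
    using tournament_arc_lt[OF T] by force
  have "card (SIGMA b:{..<n}. {a. a < n \<and> T b a}) = (\<Sum>b<n. outdeg n T b)"
    unfolding outdeg_def by (rule card_SigmaI) auto
  also have "\<dots> = n * d"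
    using reg by simp
  finally show ?thesis
    unfolding arcs by (simp add: card_image)
qed

text \<open>Vertex u beats the m vertices following it cyclically modulo 2m+1.\<close>
definition circulant_tournament :: "nat \<Rightarrow> nat \<Rightarrow> nat \<Rightarrow> bool" where
  "circulant_tournament m u v \<longleftrightarrow>
     u < 2 * m + 1 \<and> v < 2 * m + 1 \<and> (u < v \<and> v \<le> u + m \<or> v < u \<and> v + m < u)"

lemma tournament_circulant: "tournament (2 * m + 1) (circulant_tournament m)"
  unfolding tournament_def circulant_tournament_def by auto

lemma outdeg_circulant:
  assumes "u < 2 * m + 1"
  shows "outdeg (2 * m + 1) (circulant_tournament m) u = m"
proof -
  have "{v. v < 2 * m + 1 \<and> circulant_tournament m u v} =
      {u<..<min (u + m + 1) (2 * m + 1)} \<union> {..<u - m}"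
    using assms unfolding circulant_tournament_def by auto
  moreover have "card ({u<..<min (u + m + 1) (2 * m + 1)} \<union> {..<u - m}) = m"
    using assms by (subst card_Un_disjoint) auto
  ultimately show ?thesis
    unfolding outdeg_def by simp
qed

lemma reorient_regular_lower_bound:
  fixes A :: "dtree pmf"
  assumes T: "tournament n T" and reg: "\<forall>u<n. outdeg n T u = d"
    and short: "\<forall>a b. T b a \<longrightarrow> (\<forall>t \<in> set_pmf A. lookups (reorient T (a, b)) t < k)"
    and success: "\<forall>a b. T b a \<longrightarrow>
      p \<le> measure_pmf.prob A {t. champion n (reorient T (a, b)) (run (reorient T (a, b)) t)}"
  shows "p * (real n * real d) \<le> 2 * real k + real n"
proof -
  define E where "E = {(a, b). T b a}"
  have E: "E \<subseteq> {..<n} \<times> {..<n}"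
    using tournament_arc_lt[OF T] by (auto simp: E_def)
  then have "finite E"
    by (rule finite_subset) auto
  have "p * (real n * real d) = (\<Sum>e\<in>E. p)"
    using card_arcs_regular[OF T reg] by (simp add: E_def)
  also have "\<dots> \<le> (\<Sum>e\<in>E. measure_pmf.prob A {t. run (reorient T e) t = fst e})"
  proof (rule sum_mono)
    fix e
    assume "e \<in> E"
    then obtain a b where e: "e = (a, b)" and ba: "T b a"
      by (auto simp: E_def)
    then show "p \<le> measure_pmf.prob A {t. run (reorient T e) t = fst e}"
      using success[rule_format, OF ba] champion_reorient_regular[OF T reg ba] e by simp
  qed
  also have "\<dots> \<le> real (2 * k + n)"
  proof (rule sum_prob_le_card_bound[OF \<open>finite E\<close>], intro ballI)
    fix t
    assume "t \<in> set_pmf A"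
    then have "\<forall>e \<in> E. lookups (reorient T e) t < k"
      using short by (auto simp: E_def)
    then show "card {e \<in> E. t \<in> {t. run (reorient T e) t = fst e}} \<le> 2 * k + n"
      using card_reorient_detected_le[OF E] by simp
  qed
  finally show ?thesis
    by simp
qed

lemma circulant_reorientation_hard:
  fixes A :: "dtree pmf"
  assumes pm: "4 \<le> p * real m"
  defines "n \<equiv> 2 * m + 1"
  shows "\<exists>T. tournament n T \<and> champ_losses n T = m - 1 \<and>
    ((\<exists>t \<in> set_pmf A. real (lookups T t) > p / 8 * real m * real n) \<or>
     measure_pmf.prob A {t. champion n T (run T t)} < p)"
proof (rule ccontr)
  define y where "y = p / 8 * real m * real n"
  define k where "k = nat \<lceil>y\<rceil> + 1"
  have "0 < p"
    using pm mult_nonpos_nonneg[of p "real m"] by linarith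
  then have "real (nat \<lceil>y\<rceil>) = of_int \<lceil>y\<rceil>"
    by (simp add: y_def)
  then have k: "y < real k" "real k \<le> y + 2"
    using le_of_int_ceiling[of y] of_int_ceiling_le_add_one[of y] unfolding k_def by linarith+
  have circ: "tournament n (circulant_tournament m)"
    "\<forall>u<n. outdeg n (circulant_tournament m) u = m"
    unfolding n_def using tournament_circulant outdeg_circulant by blast+
  assume "\<not> ?thesis"
  then have good: "\<forall>t \<in> set_pmf A. real (lookups T t) \<le> y"
      "p \<le> measure_pmf.prob A {t. champion n T (run T t)}"
    if "tournament n T" "champ_losses n T = m - 1" for T
    using that unfolding y_def by (auto simp: not_less)
  have "champ_losses n (reorient (circulant_tournament m) (a, b)) = m - 1"
    if "circulant_tournament m b a" for a b
    using champ_losses_reorient_regular[OF circ that] unfolding n_def by simp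
  note reoriented = good[OF tournament_reorient[OF circ(1)] this]
  have "p * (real n * real m) \<le> 2 * real k + real n"
    using reorient_regular_lower_bound[OF circ, where A = A and k = k and p = p] reoriented k(1)
    by fastforce
  moreover have "4 * real n \<le> p * real m * real n"
    using pm by (rule mult_right_mono) simp
  moreover have "3 \<le> real n"
    using \<open>0 < p\<close> pm unfolding n_def by (cases "m = 0") auto
  ultimately show False
    using k(2) unfolding y_def by (simp add: algebra_simps)
qed

theorem theorem2:
  fixes p :: real and q :: "nat \<Rightarrow> nat \<Rightarrow> real"
  assumes "p > 0"
    and "\<forall>\<epsilon>>0. \<exists>N. \<forall>n \<ge> N. \<forall>l \<ge> N. q n l \<le> \<epsilon> * real l * real n"
  shows "\<forall>n0. \<exists>n \<ge> n0. \<forall>A :: dtree pmf. \<exists>T. tournament n T \<and>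
           ((\<exists>t \<in> set_pmf A. real (lookups T t) > q n (champ_losses n T)) \<or>
            measure_pmf.prob A {t. champion n T (run T t)} < p)"
proof
  fix n0
  obtain N where N: "\<forall>n \<ge> N. \<forall>l \<ge> N. q n l \<le> p / 8 * real l * real n"
    using assms by (meson divide_pos_pos zero_less_numeral)
  define m where "m = n0 + N + 1 + nat \<lceil>4 / p\<rceil>"
  define n where "n = 2 * m + 1"
  have "4 / p \<le> real m"
    unfolding m_def by linarith
  then have "4 \<le> p * real m"
    using assms(1) by (simp add: field_simps)
  note hard = circulant_reorientation_hard[OF this, folded n_def]
  have "N \<le> n" "N \<le> m - 1"
    unfolding n_def m_def by simp_all
  then have "q n (m - 1) \<le> p / 8 * real (m - 1) * real n"
    using N by blast
  also have "\<dots> \<le> p / 8 * real m * real n"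
    using assms(1) by (intro mult_right_mono mult_left_mono) auto
  finally have q: "q n (m - 1) \<le> p / 8 * real m * real n" .
  have "\<exists>T. tournament n T \<and>
           ((\<exists>t \<in> set_pmf A. real (lookups T t) > q n (champ_losses n T)) \<or>
            measure_pmf.prob A {t. champion n T (run T t)} < p)" for A
  proof -
    obtain T where "tournament n T" and losses: "champ_losses n T = m - 1"
      and "(\<exists>t \<in> set_pmf A. real (lookups T t) > p / 8 * real m * real n) \<or>
        measure_pmf.prob A {t. champion n T (run T t)} < p"
      using hard[of A] by blast
    then show ?thesis
      using losses by (intro exI[of _ T]) (fastforce dest: le_less_trans[OF q])
  qed
  moreover have "n0 \<le> n"
    unfolding n_def m_def by simp
  ultimately show "\<exists>n \<ge> n0. \<forall>A :: dtree pmf. \<exists>T. tournament n T \<and>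
           ((\<exists>t \<in> set_pmf A. real (lookups T t) > q n (champ_losses n T)) \<or>
            measure_pmf.prob A {t. champion n T (run T t)} < p)"
    by blast
qed

end
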